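(* For every non-negative integer $k$ and every proper $3$-coloring $\varphi$ of $G_k$, we have $\varphi(v_k)=\varphi(v_0)$ and $\varphi(u_k)=\varphi(u_0)$.
   Context: The outerplanar graphs $G_k$ are defined inductively. $G_0$ has vertex set $\{v_0,u_0\}$ and the single edge $\{v_0,u_0\}$. For $i\ge 1$, $G_i$ is obtained from $G_{i-1}$ by adding six new vertices $a_i,b_i,c_i,d_i,v_i,u_i$ and the edges $\{a_i,b_i\},\{c_i,d_i\},\{a_i,v_i\},\{b_i,v_i\},\{c_i,u_i\},\{d_i,u_i\},\{a_i,v_{i-1}\},\{b_i,v_{i-1}\},\{c_i,u_{i-1}\},\{d_i,u_{i-1}\}$. A proper $3$-coloring is a map $V(G_k)\to\{1,2,3\}$ giving adjacent vertices different colors. *)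

theory Defs
  imports Main
begin

datatype vtx = A nat | B nat | C nat | D nat | V nat | U nat

fun Gverts :: "nat \<Rightarrow> vtx set" where
  "Gverts 0 = {V 0, U 0}"
| "Gverts (Suc i) = Gverts i \<union> {A (Suc i), B (Suc i), C (Suc i), D (Suc i), V (Suc i), U (Suc i)}"

fun Gedges :: "nat \<Rightarrow> vtx set set" where
  "Gedges 0 = {{V 0, U 0}}"
| "Gedges (Suc i) = Gedges i \<union>
     {{A (Suc i), B (Suc i)}, {C (Suc i), D (Suc i)},
      {A (Suc i), V (Suc i)}, {B (Suc i), V (Suc i)},
      {C (Suc i), U (Suc i)}, {D (Suc i), U (Suc i)},
      {A (Suc i), V i}, {B (Suc i), V i},
      {C (Suc i), U i}, {D (Suc i), U i}}"

definition proper_3col :: "nat \<Rightarrow> (vtx \<Rightarrow> nat) \<Rightarrow> bool" where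
  "proper_3col k \<phi> \<longleftrightarrow>
     (\<forall>x\<in>Gverts k. \<phi> x \<in> {1,2,3}) \<and>
     (\<forall>x y. {x, y} \<in> Gedges k \<longrightarrow> \<phi> x \<noteq> \<phi> y)"

end

theory Submission
  imports Defs
begin

text \<open>The two gadget triangles added at level i+1 share the edge {a, b} (resp. {c, d}) with
  apexes v_i and v_(i+1) (resp. u_i and u_(i+1)). With only three colours, both apexes must
  receive the unique colour missing on that edge, so the colours of v_i and u_i are carried
  unchanged from level to level.\<close>

lemma card_3_third_element_unique:
  assumes "card S = 3" "a \<in> S" "b \<in> S" "a \<noteq> b"
    and "x \<in> S" "x \<notin> {a, b}" "y \<in> S" "y \<notin> {a, b}"
  shows "x = y"
proof -
  have "finite S" using assms(1) by (simp add: card_ge_0_finite)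
  moreover have "{a, b} \<subseteq> S" using assms(2,3) by simp
  ultimately have "card (S - {a, b}) = 1"
    using assms(1,4) by (simp add: card_Diff_subset)
  then obtain z where "S - {a, b} = {z}" by (rule card_1_singletonE)
  then show ?thesis using assms(5-8) by (metis DiffI singletonD)
qed

lemma V_U_in_Gverts: "V i \<in> Gverts i" "U i \<in> Gverts i"
  by (cases i; simp)+

lemma proper_3col_SucD: "proper_3col (Suc i) \<phi> \<Longrightarrow> proper_3col i \<phi>"
  unfolding proper_3col_def by auto

lemma proper_3col_Suc_V_U:
  assumes "proper_3col (Suc i) \<phi>"
  shows "\<phi> (V (Suc i)) = \<phi> (V i) \<and> \<phi> (U (Suc i)) = \<phi> (U i)"
proof -
  have col: "\<And>x. x \<in> Gverts (Suc i) \<Longrightarrow> \<phi> x \<in> {1, 2, 3}"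
    and edge: "\<And>x y. {x, y} \<in> Gedges (Suc i) \<Longrightarrow> \<phi> x \<noteq> \<phi> y"
    using assms unfolding proper_3col_def by blast+
  have apexes: "\<phi> p = \<phi> q"
    if "e1 \<in> Gverts (Suc i)" "e2 \<in> Gverts (Suc i)" "p \<in> Gverts (Suc i)" "q \<in> Gverts (Suc i)"
      and "{e1, e2} \<in> Gedges (Suc i)"
      and "{e1, p} \<in> Gedges (Suc i)" "{e2, p} \<in> Gedges (Suc i)"
      and "{e1, q} \<in> Gedges (Suc i)" "{e2, q} \<in> Gedges (Suc i)"
    for e1 e2 p q
    by (rule card_3_third_element_unique[of "{1, 2, 3}" "\<phi> e1" "\<phi> e2"])
      (use col[OF that(1)] col[OF that(2)] col[OF that(3)] col[OF that(4)]
        edge[OF that(5)] edge[OF that(6)] edge[OF that(7)] edge[OF that(8)] edge[OF that(9)]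
        in auto)
  have "\<phi> (V (Suc i)) = \<phi> (V i)"
    by (rule apexes[of "A (Suc i)" "B (Suc i)"]) (simp_all add: V_U_in_Gverts)
  moreover have "\<phi> (U (Suc i)) = \<phi> (U i)"
    by (rule apexes[of "C (Suc i)" "D (Suc i)"]) (simp_all add: V_U_in_Gverts)
  ultimately show ?thesis ..
qed

theorem lemma6p8:
  fixes k :: nat and \<phi> :: "vtx \<Rightarrow> nat"
  assumes "proper_3col k \<phi>"
  shows "\<phi> (V k) = \<phi> (V 0) \<and> \<phi> (U k) = \<phi> (U 0)"
  using assms
proof (induction k)
  case 0
  then show ?case by simp
next
  case (Suc k)
  then show ?case
    using proper_3col_Suc_V_U[OF Suc.prems] Suc.IH[OF proper_3col_SucD[OF Suc.prems]] by simp
qed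

end
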